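(* Let $n\ge 0$, let $\lambda,\mu$ be decompositions of $n+1$, and for $1\le j\le n$ let $\phi(x_j)=I_{n+1}+E_{j+1,j}$ and $\phi(y_j)=I_{n+1}+E_{j,j+1}$ in $\mathrm{GL}_{n+1}(\mathbb{F}_2)$. Then the image of the homomorphism $\phi_{\lambda,\mu}\colon\langle A_{2,n}(S_{\lambda|\mu})\rangle\to\mathrm{GL}_{n+1}(\mathbb{F}_2)$ sending each generator $z\in S_{\lambda|\mu}$ to $\phi(z)$ (equivalently, the subgroup of $\mathrm{GL}_{n+1}(\mathbb{F}_2)$ generated by $\{\phi(z): z\in S_{\lambda|\mu}\}$) is $P_{\lambda|\mu}$.
   Context: $E_{i,j}$ is the matrix unit with $1$ in position $(i,j)$. A decomposition of $N$ is a finite sequence of positive integers $\lambda=(\lambda_1,\dots,\lambda_l)$ with sum $N$; $P_\lambda\le\mathrm{GL}_N(\mathbb{F}_2)$ is the group of invertible block upper triangular matrices with diagonal blocks of sizes $\lambda_1,\dots,\lambda_l$ in this order; $P_\mu^t$ is the group of transposes of elements of $P_\mu$; $P_{\lambda|\mu}=P_\lambda\cap P_\mu^t$. The stopover set is $\overline{s}(\lambda)=\{\lambda_1,\lambda_1+\lambda_2,\dots,\lambda_1+\dots+\lambda_{l-1}\}$, and $S_{\lambda|\mu}=\{x_i : 1\le i\le n,\ i\notin\overline{s}(\lambda)\}\cup\{y_j: 1\le j\le n,\ j\notin\overline{s}(\mu)\}$. The group $\langle A_{2,n}\rangle$ has generators $X=\{x_1,\dots,x_n,y_1,\dots,y_n\}$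 and relations: $z^2=e$ ($z\in X$); $(x_ix_{i+1})^4=(y_iy_{i+1})^4=e$ ($1\le i\le n-1$); $(x_iy_i)^3=e$ ($1\le i\le n$); $(zt)^2=e$ for every other pair of distinct $z,t\in X$; $(x_ix_{i+1}y_i)^3=(x_ix_{i+1}y_{i+1})^3=(x_iy_iy_{i+1})^3=(x_{i+1}y_iy_{i+1})^3=e$ ($1\le i\le n-1$); $(x_ix_{i+1}x_{i+2})^4=(y_iy_{i+1}y_{i+2})^4=e$ ($1\le i\le n-2$). For $S\subseteq X$, $\langle A_{2,n}(S)\rangle$ is the group generated by $S$ subject to exactly those relations above involving only elements of $S$. *)

theory Defs
  imports "Jordan_Normal_Form.Matrix" "HOL-Library.Z2" "HOL-Algebra.Generated_Groups"
begin

text \<open>Matrices over F_2 are JNF matrices with entries in the field type bit.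
  Paper indices are 1-based; JNF indices are 0-based, so paper entry (i,j) is A $$ (i-1, j-1).\<close>

definition GL :: "nat \<Rightarrow> bit mat set" where
  "GL N = {A \<in> carrier_mat N N. invertible_mat A}"

definition GL_group :: "nat \<Rightarrow> bit mat monoid" where
  "GL_group N = \<lparr>carrier = GL N, mult = (*), one = 1\<^sub>m N\<rparr>"

definition E_unit :: "nat \<Rightarrow> nat \<Rightarrow> nat \<Rightarrow> bit mat" where
  "E_unit N i j = mat N N (\<lambda>(a, b). if a = i - 1 \<and> b = j - 1 then 1 else 0)"

definition decomposition :: "nat \<Rightarrow> nat list \<Rightarrow> bool" where
  "decomposition N lam \<longleftrightarrow> (\<forall>k \<in> set lam. 0 < k) \<and> sum_list lam = N"

definition stopover :: "nat list \<Rightarrow> nat set" where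
  "stopover lam = {sum_list (take k lam) | k. 1 \<le> k \<and> k \<le> length lam - 1}"

definition block_of :: "nat list \<Rightarrow> nat \<Rightarrow> nat" where
  "block_of lam i = card {s \<in> stopover lam. s < i}"

text \<open>P_lam: invertible block upper triangular matrices with diagonal blocks of sizes
  lam_1, ..., lam_l in this order: entry (i,j) vanishes when row i lies in a later block than column j.\<close>
definition P_par :: "nat \<Rightarrow> nat list \<Rightarrow> bit mat set" where
  "P_par N lam = {A \<in> GL N. \<forall>i \<in> {1..N}. \<forall>j \<in> {1..N}.
      block_of lam j < block_of lam i \<longrightarrow> A $$ (i - 1, j - 1) = 0}"

definition P_par_t :: "nat \<Rightarrow> nat list \<Rightarrow> bit mat set" where
  "P_par_t N mu = transpose_mat ` P_par N mu"

definition P_bar :: "nat \<Rightarrow> nat list \<Rightarrow> nat list \<Rightarrow> bit mat set" where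
  "P_bar N lam mu = P_par N lam \<inter> P_par_t N mu"

datatype gen = X nat | Y nat

definition S_gens :: "nat \<Rightarrow> nat list \<Rightarrow> nat list \<Rightarrow> gen set" where
  "S_gens n lam mu = {X i | i. 1 \<le> i \<and> i \<le> n \<and> i \<notin> stopover lam}
                   \<union> {Y j | j. 1 \<le> j \<and> j \<le> n \<and> j \<notin> stopover mu}"

fun phi :: "nat \<Rightarrow> gen \<Rightarrow> bit mat" where
  "phi n (X j) = 1\<^sub>m (n + 1) + E_unit (n + 1) (j + 1) j"
| "phi n (Y j) = 1\<^sub>m (n + 1) + E_unit (n + 1) j (j + 1)"

end

theory Submission
  imports Defs "Jordan_Normal_Form.Determinant"
begin

(* The generators map to the transvections I + E between neighbouring indices that lie in a
   common block of lam (below the diagonal) or of mu (above it). Commutators of transvections,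
   (I + E_ik)(I + E_kj)(I + E_ik)(I + E_kj) = I + E_ij, chain these together into every
   transvection I + E_ij whose position is allowed in P_{lam|mu}, i.e. row and column lie in the
   same block of lam if i > j and of mu if i < j. Conversely, P_{lam|mu} is the group of
   invertible matrices supported on a transitive pattern, so it is closed under products and
   contains the generators. Every matrix in it is reduced to the identity by Gaussian elimination
   with admissible transvections, processing the indices from the last to the first: a nonzero
   pivot is produced by one row or column operation (monotonicity of the block index guarantees
   that one of the two is admissible), after which the pivot row and column are cleared. *)

lemma mult_mat_entry_nonzero:
  fixes A B :: "'a :: semiring_0 mat"
  assumes "A \<in> carrier_mat nr n" "B \<in> carrier_mat n nc" "a < nr" "c < nc" "(A * B) $$ (a, c) \<noteq> 0"
  shows "\<exists>b<n. A $$ (a, b) \<noteq> 0 \<and> B $$ (b, c) \<noteq> 0"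
proof -
  have "(\<Sum>b\<in>{0..<n}. A $$ (a, b) * B $$ (b, c)) \<noteq> 0"
    using assms by (simp add: scalar_prod_def)
  then obtain b where "b \<in> {0..<n}" "A $$ (a, b) * B $$ (b, c) \<noteq> 0"
    by (rule sum.not_neutral_contains_not_neutral)
  then show ?thesis by auto
qed

lemma invertible_mat_iff_Units:
  assumes "(A :: 'a :: semiring_1 mat) \<in> carrier_mat N N"
  shows "invertible_mat A \<longleftrightarrow> A \<in> Units (ring_mat TYPE('a) N b)"
proof
  assume "invertible_mat A"
  then obtain B where AB: "A * B = 1\<^sub>m N" and BA: "B * A = 1\<^sub>m (dim_row B)"
    using assms unfolding invertible_mat_def inverts_mat_def by auto
  have "B \<in> carrier_mat N N"
    using arg_cong[OF AB, of dim_col] arg_cong[OF BA, of dim_col] assms by auto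
  with AB BA show "A \<in> Units (ring_mat TYPE('a) N b)"
    using assms by (auto simp: Units_def ring_mat_simps)
next
  assume "A \<in> Units (ring_mat TYPE('a) N b)"
  then show "invertible_mat A"
    using assms by (auto simp: Units_def ring_mat_simps invertible_mat_def inverts_mat_def)
qed

lemma GL_iff_det: "A \<in> GL N \<longleftrightarrow> A \<in> carrier_mat N N \<and> det A \<noteq> 0"
proof (cases "A \<in> carrier_mat N N")
  case True
  then have "invertible_mat A \<longleftrightarrow> A \<in> Units (ring_mat TYPE(bit) N ())"
    by (rule invertible_mat_iff_Units)
  also have "\<dots> \<longleftrightarrow> det A \<noteq> 0"
    using unit_imp_det_non_zero[of A N "()"] det_non_zero_imp_unit[OF True, of "()"] by blast
  finally show ?thesis using True by (simp add: GL_def)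
qed (simp add: GL_def)

lemma GL_carrier: "A \<in> GL N \<Longrightarrow> A \<in> carrier_mat N N"
  by (simp add: GL_def)

lemma one_mat_GL: "1\<^sub>m N \<in> GL N"
  by (simp add: GL_iff_det)

lemma mult_GL: "A \<in> GL N \<Longrightarrow> B \<in> GL N \<Longrightarrow> A * B \<in> GL N"
  unfolding GL_iff_det using det_mult[of A N B] by auto

lemma transpose_GL: "A \<in> GL N \<Longrightarrow> transpose_mat A \<in> GL N"
  unfolding GL_iff_det using det_transpose[of A N] by auto

lemma monoid_GL_group: "monoid (GL_group N)"
  by (rule monoidI)
    (auto simp: GL_group_def one_mat_GL mult_GL dest: GL_carrier intro: assoc_mult_mat[of _ N N _ N _ N])

lemma GL_col_nonzero:
  assumes "A \<in> GL N" "j < N"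
  shows "\<exists>i<N. A $$ (i, j) \<noteq> 0"
proof (rule ccontr)
  assume "\<not> ?thesis"
  then have "A *\<^sub>v unit_vec N j = 0\<^sub>v N"
    using assms by (intro eq_vecI) (auto simp: GL_iff_det scalar_prod_def unit_vec_def)
  then show False
    using assms det_0_iff_vec_prod_zero_field[of A N] unit_vec_nonzero[of j N] unit_vec_carrier[of N j]
    unfolding GL_iff_det by blast
qed

lemma GL_row_nonzero:
  assumes "A \<in> GL N" "i < N"
  shows "\<exists>j<N. A $$ (i, j) \<noteq> 0"
proof -
  obtain j where "j < N" "transpose_mat A $$ (j, i) \<noteq> 0"
    using GL_col_nonzero[OF transpose_GL[OF assms(1)] assms(2)] by blast
  then show ?thesis
    using assms unfolding GL_iff_det by auto
qed

section \<open>Transvections\<close>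

text \<open>Indices are 0-based: this is the paper's matrix I + E_{i+1,j+1}.\<close>
definition transvection :: "nat \<Rightarrow> nat \<Rightarrow> nat \<Rightarrow> bit mat" where
  "transvection N i j = addrow_mat N 1 i j"

lemma transvection_carrier [simp]: "transvection N i j \<in> carrier_mat N N"
  and dim_transvection [simp]: "dim_row (transvection N i j) = N" "dim_col (transvection N i j) = N"
  by (simp_all add: transvection_def)

lemma index_transvection:
  "a < N \<Longrightarrow> b < N \<Longrightarrow> transvection N i j $$ (a, b) = 1\<^sub>m N $$ (a, b) + (if a = i \<and> b = j then 1 else 0)"
  by (simp add: transvection_def)

lemma transvection_mult_left:
  "A \<in> carrier_mat N N \<Longrightarrow> j < N \<Longrightarrow> transvection N i j * A = addrow 1 i j A"
  unfolding transvection_def by (rule addrow_mat[symmetric])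

lemma transvection_mult_right:
  "A \<in> carrier_mat N N \<Longrightarrow> i < N \<Longrightarrow> A * transvection N i j = addcol 1 j i A"
  unfolding transvection_def by (rule addcol_mat[symmetric])

lemma addcol_carrier [simp]: "addcol a k l A \<in> carrier_mat nr nc \<longleftrightarrow> A \<in> carrier_mat nr nc"
  unfolding carrier_mat_def by simp

lemma transvection_involution:
  "i \<noteq> j \<Longrightarrow> i < N \<Longrightarrow> j < N \<Longrightarrow> transvection N i j * transvection N i j = 1\<^sub>m N"
  using addrow_mat_inv[of i N j "1 :: bit"] by (simp add: transvection_def)

lemma transvection_GL: "i \<noteq> j \<Longrightarrow> transvection N i j \<in> GL N"
  by (simp add: GL_iff_det transvection_def det_addrow_mat)

lemma transvection_commutator:
  assumes "distinct [i, k, j]" "i < N" "k < N" "j < N"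
  shows "transvection N i j = transvection N i k * transvection N k j * transvection N i k * transvection N k j"
proof -
  have "transvection N i k * transvection N k j * transvection N i k * transvection N k j
      = addcol 1 j k (addcol 1 k i (addcol 1 j k (transvection N i k)))"
    using assms by (simp add: transvection_mult_right)
  also have "\<dots> = transvection N i j"
    using assms by (intro eq_matI) (auto simp: index_transvection)
  finally show ?thesis by simp
qed

section \<open>Pattern groups\<close>

text \<open>For monotone f and g, whose level sets are blocks of consecutive indices, this is the
  support of the matrices that are block upper triangular for the blocks of f and block lower
  triangular for the blocks of g.\<close>
definition block_pattern :: "(nat \<Rightarrow> nat) \<Rightarrow> (nat \<Rightarrow> nat) \<Rightarrow> nat \<Rightarrow> nat \<Rightarrow> bool" where
  "block_pattern f g a b \<longleftrightarrow> f a \<le> f b \<and> g b \<le> g a"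

lemma reflp_block_pattern: "reflp (block_pattern f g)"
  by (rule reflpI) (simp add: block_pattern_def)

lemma transp_block_pattern: "transp (block_pattern f g)"
  by (rule transpI) (auto simp: block_pattern_def)

definition pattern_group :: "nat \<Rightarrow> (nat \<Rightarrow> nat \<Rightarrow> bool) \<Rightarrow> bit mat set" where
  "pattern_group N R = {A \<in> GL N. \<forall>a<N. \<forall>b<N. A $$ (a, b) \<noteq> 0 \<longrightarrow> R a b}"

lemma pattern_group_GL: "A \<in> pattern_group N R \<Longrightarrow> A \<in> GL N"
  by (simp add: pattern_group_def)

lemma pattern_group_entry: "A \<in> pattern_group N R \<Longrightarrow> a < N \<Longrightarrow> b < N \<Longrightarrow> A $$ (a, b) \<noteq> 0 \<Longrightarrow> R a b"
  by (simp add: pattern_group_def)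

lemma one_mat_pattern_group: "reflp R \<Longrightarrow> 1\<^sub>m N \<in> pattern_group N R"
  by (simp add: pattern_group_def one_mat_GL reflpD)

lemma transvection_pattern_group:
  "reflp R \<Longrightarrow> i \<noteq> j \<Longrightarrow> R i j \<Longrightarrow> transvection N i j \<in> pattern_group N R"
  by (auto simp: pattern_group_def transvection_GL index_transvection reflpD split: if_splits)

lemma pattern_group_mult:
  assumes R: "transp R" and A: "A \<in> pattern_group N R" and B: "B \<in> pattern_group N R"
  shows "A * B \<in> pattern_group N R"
  unfolding pattern_group_def
proof (intro CollectI conjI allI impI)
  show "A * B \<in> GL N"
    using A B by (simp add: pattern_group_GL mult_GL)
  fix a c assume ac: "a < N" "c < N" "(A * B) $$ (a, c) \<noteq> 0"
  then obtain b where b: "b < N" "A $$ (a, b) \<noteq> 0" "B $$ (b, c) \<noteq> 0"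
    using mult_mat_entry_nonzero GL_carrier[OF pattern_group_GL[OF A]] GL_carrier[OF pattern_group_GL[OF B]]
    by blast
  have "R a b" "R b c"
    using pattern_group_entry[OF A ac(1) b(1,2)] pattern_group_entry[OF B b(1) ac(2) b(3)] .
  then show "R a c"
    using transpD[OF R] by blast
qed

lemma addrow_pattern_group:
  assumes "reflp R" "transp R" "A \<in> pattern_group N R" "i \<noteq> j" "j < N" "R i j"
  shows "addrow 1 i j A \<in> pattern_group N R"
proof -
  have "transvection N i j * A \<in> pattern_group N R"
    using assms by (intro pattern_group_mult transvection_pattern_group)
  then show ?thesis
    using assms by (simp add: transvection_mult_left pattern_group_GL GL_carrier)
qed

lemma addcol_pattern_group:
  assumes "reflp R" "transp R" "A \<in> pattern_group N R" "i \<noteq> j" "i < N" "R i j"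
  shows "addcol 1 j i A \<in> pattern_group N R"
proof -
  have "A * transvection N i j \<in> pattern_group N R"
    using assms by (intro pattern_group_mult transvection_pattern_group)
  then show ?thesis
    using assms by (simp add: transvection_mult_right pattern_group_GL GL_carrier)
qed

section \<open>Elimination inside a pattern group\<close>

definition identity_outside_corner :: "nat \<Rightarrow> nat \<Rightarrow> 'a :: semiring_1 mat \<Rightarrow> bool" where
  "identity_outside_corner N k A \<longleftrightarrow>
     (\<forall>a<N. \<forall>b<N. (k \<le> a \<or> k \<le> b) \<longrightarrow> A $$ (a, b) = 1\<^sub>m N $$ (a, b))"

lemma identity_outside_corner_full: "identity_outside_corner N N A"
  by (simp add: identity_outside_corner_def)

lemma identity_outside_corner_0:
  "A \<in> carrier_mat N N \<Longrightarrow> identity_outside_corner N 0 A \<Longrightarrow> A = 1\<^sub>m N"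
  by (intro eq_matI) (auto simp: identity_outside_corner_def)

lemma identity_outside_corner_addrow:
  assumes A: "A \<in> carrier_mat N N" and I: "identity_outside_corner N k A" and "i < k" "j < k"
  shows "identity_outside_corner N k (addrow c i j A)"
  unfolding identity_outside_corner_def
proof (intro allI impI)
  fix a b assume ab: "a < N" "b < N" "k \<le> a \<or> k \<le> b"
  then have Aab: "A $$ (a, b) = 1\<^sub>m N $$ (a, b)"
    using I unfolding identity_outside_corner_def by blast
  show "addrow c i j A $$ (a, b) = 1\<^sub>m N $$ (a, b)"
  proof (cases "a = i")
    case True
    then have "k \<le> b" "j < N"
      using ab \<open>i < k\<close> \<open>j < k\<close> by linarith+
    then have "A $$ (j, b) = 0"
      using I ab \<open>j < k\<close> unfolding identity_outside_corner_def by auto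
    then show ?thesis using A ab Aab True by simp
  next
    case False
    then show ?thesis using A ab Aab by simp
  qed
qed

lemma identity_outside_corner_addcol:
  assumes A: "A \<in> carrier_mat N N" and I: "identity_outside_corner N k A" and "i < k" "j < k"
  shows "identity_outside_corner N k (addcol c i j A)"
  unfolding identity_outside_corner_def
proof (intro allI impI)
  fix a b assume ab: "a < N" "b < N" "k \<le> a \<or> k \<le> b"
  then have Aab: "A $$ (a, b) = 1\<^sub>m N $$ (a, b)"
    using I unfolding identity_outside_corner_def by blast
  show "addcol c i j A $$ (a, b) = 1\<^sub>m N $$ (a, b)"
  proof (cases "b = i")
    case True
    then have "k \<le> a" "j < N"
      using ab \<open>i < k\<close> \<open>j < k\<close> by linarith+
    then have "A $$ (a, j) = 0"
      using I ab \<open>j < k\<close> unfolding identity_outside_corner_def by auto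
    then show ?thesis using A ab Aab True by simp
  next
    case False
    then show ?thesis using A ab Aab by simp
  qed
qed

lemma identity_outside_corner_shrink:
  assumes "identity_outside_corner N (Suc m) A" "A $$ (m, m) = 1"
    and "\<forall>r<m. A $$ (r, m) = 0" "\<forall>c<m. A $$ (m, c) = 0"
  shows "identity_outside_corner N m A"
  unfolding identity_outside_corner_def
proof (intro allI impI)
  fix a b assume "a < N" "b < N" "m \<le> a \<or> m \<le> b"
  then consider "Suc m \<le> a \<or> Suc m \<le> b" | "a = m" "b \<le> m" | "b = m" "a < m"
    by linarith
  then show "A $$ (a, b) = 1\<^sub>m N $$ (a, b)"
    by cases (use assms \<open>a < N\<close> \<open>b < N\<close> in \<open>auto simp: identity_outside_corner_def\<close>)
qed

text \<open>Each elimination step trades the matrix A for a simpler B with B \<in> H \<longrightarrow> A \<in> H,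
  B arising from A by multiplication with transvections of H.\<close>
locale transvection_closed =
  fixes N :: nat and f g :: "nat \<Rightarrow> nat" and H :: "bit mat set"
  assumes mono_f: "mono f" and mono_g: "mono g"
    and one_mem: "1\<^sub>m N \<in> H"
    and mult_mem: "A \<in> H \<Longrightarrow> B \<in> H \<Longrightarrow> A * B \<in> H"
    and transvection_mem:
      "i < N \<Longrightarrow> j < N \<Longrightarrow> i \<noteq> j \<Longrightarrow> block_pattern f g i j \<Longrightarrow> transvection N i j \<in> H"
begin

abbreviation PG :: "bit mat set" where
  "PG \<equiv> pattern_group N (block_pattern f g)"

lemma PG_carrier: "A \<in> PG \<Longrightarrow> A \<in> carrier_mat N N"
  by (rule GL_carrier[OF pattern_group_GL])

lemma PG_addrow: "A \<in> PG \<Longrightarrow> i \<noteq> j \<Longrightarrow> j < N \<Longrightarrow> block_pattern f g i j \<Longrightarrow> addrow 1 i j A \<in> PG"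
  by (rule addrow_pattern_group[OF reflp_block_pattern transp_block_pattern])

lemma PG_addcol: "A \<in> PG \<Longrightarrow> i \<noteq> j \<Longrightarrow> i < N \<Longrightarrow> block_pattern f g i j \<Longrightarrow> addcol 1 j i A \<in> PG"
  by (rule addcol_pattern_group[OF reflp_block_pattern transp_block_pattern])

lemma mem_if_addrow_mem:
  assumes "A \<in> carrier_mat N N" "i < N" "j < N" "i \<noteq> j" "block_pattern f g i j"
    and "addrow 1 i j A \<in> H"
  shows "A \<in> H"
proof -
  let ?T = "transvection N i j"
  have "?T * (?T * A) = (?T * ?T) * A"
    using assms by (simp add: assoc_mult_mat[of _ N N _ N _ N])
  also have "\<dots> = A"
    using assms by (simp add: transvection_involution)
  finally have "A = ?T * addrow 1 i j A"
    using assms by (simp add: transvection_mult_left)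
  with mult_mem[OF transvection_mem[OF assms(2-5)] assms(6)] show ?thesis
    by simp
qed

lemma mem_if_addcol_mem:
  assumes "A \<in> carrier_mat N N" "i < N" "j < N" "i \<noteq> j" "block_pattern f g i j"
    and "addcol 1 j i A \<in> H"
  shows "A \<in> H"
proof -
  let ?T = "transvection N i j"
  have "(A * ?T) * ?T = A * (?T * ?T)"
    using assms by (simp add: assoc_mult_mat[of _ N N _ N _ N])
  also have "\<dots> = A"
    using assms by (simp add: transvection_involution)
  finally have "A = addcol 1 j i A * ?T"
    using assms by (simp add: transvection_mult_right)
  with mult_mem[OF assms(6) transvection_mem[OF assms(2-5)]] show ?thesis
    by simp
qed

lemma pivot_to_one:
  assumes A: "A \<in> PG" and I: "identity_outside_corner N (Suc m) A" and m: "m < N"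
  shows "\<exists>B\<in>PG. identity_outside_corner N (Suc m) B \<and> B $$ (m, m) = 1 \<and> (B \<in> H \<longrightarrow> A \<in> H)"
proof (cases "A $$ (m, m) = 1")
  case True
  then show ?thesis using A I by blast
next
  case False
  then have Amm: "A $$ (m, m) = 0" by simp
  have cA: "A \<in> carrier_mat N N" using A by (rule PG_carrier)
  obtain r where r: "r < N" "A $$ (r, m) \<noteq> 0"
    using GL_col_nonzero[OF pattern_group_GL[OF A] m] by blast
  obtain c where c: "c < N" "A $$ (m, c) \<noteq> 0"
    using GL_row_nonzero[OF pattern_group_GL[OF A] m] by blast
  have "r < m"
  proof (rule ccontr)
    assume "\<not> r < m"
    with r Amm have "Suc m \<le> r" by (cases "r = m") auto
    with I r m show False unfolding identity_outside_corner_def by auto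
  qed
  have "c < m"
  proof (rule ccontr)
    assume "\<not> c < m"
    with c Amm have "Suc m \<le> c" by (cases "c = m") auto
    with I c m show False unfolding identity_outside_corner_def by auto
  qed
  have Rrm: "block_pattern f g r m" and Rmc: "block_pattern f g m c"
    using pattern_group_entry[OF A r(1) m r(2)] pattern_group_entry[OF A m c(1) c(2)] .
  \<comment> \<open>Whichever of the candidate pivots c and r is smaller, monotonicity of f and g makes the
    corresponding row or column operation admissible.\<close>
  show ?thesis
  proof (cases "c \<le> r")
    case True
    have "f c \<le> f r" "g r \<le> g m"
      using monoD[OF mono_f True] monoD[OF mono_g, of r m] \<open>r < m\<close> by auto
    then have Rmr: "block_pattern f g m r"
      using Rmc unfolding block_pattern_def by linarith
    let ?B = "addrow 1 m r A"
    have "?B $$ (m, m) = 1" using cA m r Amm by simp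
    moreover have "?B \<in> PG" using PG_addrow[OF A _ r(1) Rmr] \<open>r < m\<close> by simp
    moreover have "identity_outside_corner N (Suc m) ?B"
      using identity_outside_corner_addrow[OF cA I] \<open>r < m\<close> by simp
    moreover have "?B \<in> H \<longrightarrow> A \<in> H"
      using mem_if_addrow_mem[OF cA m r(1) _ Rmr] \<open>r < m\<close> by simp
    ultimately show ?thesis by blast
  next
    case False
    have "f c \<le> f m" "g r \<le> g c"
      using monoD[OF mono_f, of c m] monoD[OF mono_g, of r c] \<open>c < m\<close> False by auto
    then have Rcm: "block_pattern f g c m"
      using Rrm unfolding block_pattern_def by linarith
    let ?B = "addcol 1 m c A"
    have "?B $$ (m, m) = 1" using cA m c Amm by simp
    moreover have "?B \<in> PG" using PG_addcol[OF A _ c(1) Rcm] \<open>c < m\<close> by simp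
    moreover have "identity_outside_corner N (Suc m) ?B"
      using identity_outside_corner_addcol[OF cA I] \<open>c < m\<close> by simp
    moreover have "?B \<in> H \<longrightarrow> A \<in> H"
      using mem_if_addcol_mem[OF cA c(1) m _ Rcm] \<open>c < m\<close> by simp
    ultimately show ?thesis by blast
  qed
qed

lemma clear_above_pivot:
  assumes A: "A \<in> PG" "identity_outside_corner N (Suc m) A" "A $$ (m, m) = 1" and m: "m < N"
  shows "t \<le> m \<Longrightarrow> \<exists>B\<in>PG. identity_outside_corner N (Suc m) B \<and> B $$ (m, m) = 1
    \<and> (\<forall>r<t. B $$ (r, m) = 0) \<and> (B \<in> H \<longrightarrow> A \<in> H)"
proof (induction t)
  case 0
  then show ?case using A by blast
next
  case (Suc t)
  then have t: "t < m" by simp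
  from Suc.IH[OF Suc_leD[OF Suc.prems]] obtain B where B: "B \<in> PG" "identity_outside_corner N (Suc m) B"
    "B $$ (m, m) = 1" "\<forall>r<t. B $$ (r, m) = 0" "B \<in> H \<longrightarrow> A \<in> H"
    by blast
  show ?case
  proof (cases "B $$ (t, m) = 0")
    case True
    then have "\<forall>r<Suc t. B $$ (r, m) = 0" using B(4) less_Suc_eq by auto
    then show ?thesis using B by blast
  next
    case False
    have cB: "B \<in> carrier_mat N N" using B(1) by (rule PG_carrier)
    have Rtm: "block_pattern f g t m" using pattern_group_entry[OF B(1) _ m False] t m by simp
    let ?B = "addrow 1 t m B"
    have "?B $$ (m, m) = 1" using cB m t B(3) by simp
    moreover have "\<forall>r<Suc t. ?B $$ (r, m) = 0"
      using cB m t B(3,4) False by (auto simp: less_Suc_eq)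
    moreover have "?B \<in> PG" using PG_addrow[OF B(1) _ m Rtm] t by simp
    moreover have "identity_outside_corner N (Suc m) ?B"
      using identity_outside_corner_addrow[OF cB B(2)] t by simp
    moreover have "?B \<in> H \<longrightarrow> A \<in> H"
      using mem_if_addrow_mem[OF cB _ m _ Rtm] B(5) t m by simp
    ultimately show ?thesis by blast
  qed
qed

lemma clear_left_of_pivot:
  assumes A: "A \<in> PG" "identity_outside_corner N (Suc m) A" "A $$ (m, m) = 1"
    "\<forall>r<m. A $$ (r, m) = 0" and m: "m < N"
  shows "t \<le> m \<Longrightarrow> \<exists>B\<in>PG. identity_outside_corner N (Suc m) B \<and> B $$ (m, m) = 1
    \<and> (\<forall>r<m. B $$ (r, m) = 0) \<and> (\<forall>c<t. B $$ (m, c) = 0) \<and> (B \<in> H \<longrightarrow> A \<in> H)"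
proof (induction t)
  case 0
  then show ?case using A by blast
next
  case (Suc t)
  then have t: "t < m" by simp
  from Suc.IH[OF Suc_leD[OF Suc.prems]] obtain B where B: "B \<in> PG" "identity_outside_corner N (Suc m) B"
    "B $$ (m, m) = 1" "\<forall>r<m. B $$ (r, m) = 0" "\<forall>c<t. B $$ (m, c) = 0" "B \<in> H \<longrightarrow> A \<in> H"
    by blast
  show ?case
  proof (cases "B $$ (m, t) = 0")
    case True
    then have "\<forall>c<Suc t. B $$ (m, c) = 0" using B(5) less_Suc_eq by auto
    then show ?thesis using B by blast
  next
    case False
    have cB: "B \<in> carrier_mat N N" using B(1) by (rule PG_carrier)
    have Rmt: "block_pattern f g m t" using pattern_group_entry[OF B(1) m _ False] t m by simp
    let ?B = "addcol 1 t m B"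
    have "?B $$ (m, m) = 1" using cB m t B(3) by simp
    moreover have "\<forall>r<m. ?B $$ (r, m) = 0" using cB m t B(4) by simp
    moreover have "\<forall>c<Suc t. ?B $$ (m, c) = 0"
      using cB m t B(3,5) False by (auto simp: less_Suc_eq)
    moreover have "?B \<in> PG" using PG_addcol[OF B(1) _ m Rmt] t by simp
    moreover have "identity_outside_corner N (Suc m) ?B"
      using identity_outside_corner_addcol[OF cB B(2)] t by simp
    moreover have "?B \<in> H \<longrightarrow> A \<in> H"
      using mem_if_addcol_mem[OF cB m _ _ Rmt] B(6) t m by simp
    ultimately show ?thesis by blast
  qed
qed

lemma shrink_corner:
  assumes "A \<in> PG" "identity_outside_corner N (Suc m) A" "m < N"
  shows "\<exists>B\<in>PG. identity_outside_corner N m B \<and> (B \<in> H \<longrightarrow> A \<in> H)"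
proof -
  obtain B1 where B1: "B1 \<in> PG" "identity_outside_corner N (Suc m) B1" "B1 $$ (m, m) = 1"
    "B1 \<in> H \<longrightarrow> A \<in> H"
    using pivot_to_one[OF assms] by blast
  obtain B2 where B2: "B2 \<in> PG" "identity_outside_corner N (Suc m) B2" "B2 $$ (m, m) = 1"
    "\<forall>r<m. B2 $$ (r, m) = 0" "B2 \<in> H \<longrightarrow> B1 \<in> H"
    using clear_above_pivot[OF B1(1-3) assms(3) order_refl] by blast
  obtain B3 where B3: "B3 \<in> PG" "identity_outside_corner N (Suc m) B3" "B3 $$ (m, m) = 1"
    "\<forall>r<m. B3 $$ (r, m) = 0" "\<forall>c<m. B3 $$ (m, c) = 0" "B3 \<in> H \<longrightarrow> B2 \<in> H"
    using clear_left_of_pivot[OF B2(1-4) assms(3) order_refl] by blast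
  have "identity_outside_corner N m B3"
    using identity_outside_corner_shrink[OF B3(2-5)] .
  then show ?thesis using B1(4) B2(5) B3(1,6) by blast
qed

lemma pattern_group_subset: "PG \<subseteq> H"
proof
  have "A \<in> H" if "A \<in> PG" "identity_outside_corner N k A" "k \<le> N" for k A
    using that
  proof (induction k arbitrary: A)
    case 0
    then show ?case using identity_outside_corner_0[OF PG_carrier] one_mem by simp
  next
    case (Suc m)
    then obtain B where "B \<in> PG" "identity_outside_corner N m B" "B \<in> H \<longrightarrow> A \<in> H"
      using shrink_corner by (meson Suc_le_eq)
    then show ?case using Suc.IH Suc.prems(3) by simp
  qed
  then show "A \<in> H" if "A \<in> PG" for A
    using that identity_outside_corner_full by blast
qed

end

section \<open>Generation by adjacent transvections\<close>

lemma transvection_chain_mem: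
  assumes mult_mem: "\<And>A B. A \<in> H \<Longrightarrow> B \<in> H \<Longrightarrow> A * B \<in> H"
    and "transvection N i k \<in> H" "transvection N k j \<in> H"
    and "distinct [i, k, j]" "i < N" "k < N" "j < N"
  shows "transvection N i j \<in> H"
  using assms by (simp add: transvection_commutator[OF assms(4-)])

lemma upper_transvection_mem:
  assumes mult_mem: "\<And>A B. A \<in> H \<Longrightarrow> B \<in> H \<Longrightarrow> A * B \<in> H"
    and adjacent: "\<And>i. Suc i < N \<Longrightarrow> g i = g (Suc i) \<Longrightarrow> transvection N i (Suc i) \<in> H"
    and "mono g"
  shows "a < b \<Longrightarrow> b < N \<Longrightarrow> g a = g b \<Longrightarrow> transvection N a b \<in> H"
proof (induction b)
  case 0
  then show ?case by simp
next
  case (Suc b)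
  have "g a \<le> g b" "g b \<le> g (Suc b)"
    using monoD[OF \<open>mono g\<close>] Suc.prems(1) by simp_all
  then have gb: "g b = g (Suc b)" and "a < b \<Longrightarrow> g a = g b"
    using Suc.prems(3) by simp_all
  show ?case
  proof (cases "a = b")
    case True
    then show ?thesis using adjacent Suc.prems(2) gb by simp
  next
    case False
    with Suc.prems have "a < b" by simp
    with Suc.IH Suc.prems \<open>a < b \<Longrightarrow> g a = g b\<close> have "transvection N a b \<in> H" by simp
    from transvection_chain_mem[OF mult_mem this adjacent[OF Suc.prems(2) gb]] show ?thesis
      using \<open>a < b\<close> Suc.prems(2) by simp
  qed
qed

lemma lower_transvection_mem:
  assumes mult_mem: "\<And>A B. A \<in> H \<Longrightarrow> B \<in> H \<Longrightarrow> A * B \<in> H"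
    and adjacent: "\<And>i. Suc i < N \<Longrightarrow> f i = f (Suc i) \<Longrightarrow> transvection N (Suc i) i \<in> H"
    and "mono f"
  shows "b < a \<Longrightarrow> a < N \<Longrightarrow> f b = f a \<Longrightarrow> transvection N a b \<in> H"
proof (induction a)
  case 0
  then show ?case by simp
next
  case (Suc a)
  have "f b \<le> f a" "f a \<le> f (Suc a)"
    using monoD[OF \<open>mono f\<close>] Suc.prems(1) by simp_all
  then have fa: "f a = f (Suc a)" and "b < a \<Longrightarrow> f b = f a"
    using Suc.prems(3) by simp_all
  show ?case
  proof (cases "b = a")
    case True
    then show ?thesis using adjacent Suc.prems(2) fa by simp
  next
    case False
    with Suc.prems have "b < a" by simp
    with Suc.IH Suc.prems \<open>b < a \<Longrightarrow> f b = f a\<close> have "transvection N a b \<in> H" by simp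
    from transvection_chain_mem[OF mult_mem adjacent[OF Suc.prems(2) fa] this] show ?thesis
      using \<open>b < a\<close> Suc.prems(2) by simp
  qed
qed

definition adjacent_transvections :: "nat \<Rightarrow> (nat \<Rightarrow> nat) \<Rightarrow> (nat \<Rightarrow> nat) \<Rightarrow> bit mat set" where
  "adjacent_transvections N f g =
     (\<lambda>i. transvection N (Suc i) i) ` {i. Suc i < N \<and> f i = f (Suc i)}
   \<union> (\<lambda>i. transvection N i (Suc i)) ` {i. Suc i < N \<and> g i = g (Suc i)}"

lemma adjacent_transvections_pattern_group:
  assumes "mono f" "mono g" "T \<in> adjacent_transvections N f g"
  shows "T \<in> pattern_group N (block_pattern f g)"
proof -
  have "f i \<le> f (Suc i)" "g i \<le> g (Suc i)" for i
    using assms(1,2) by (simp_all add: monoD)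
  then show ?thesis
    using assms(3) unfolding adjacent_transvections_def
    by (auto intro!: transvection_pattern_group reflp_block_pattern simp: block_pattern_def)
qed

lemma adjacent_transvection_involution:
  "T \<in> adjacent_transvections N f g \<Longrightarrow> T * T = 1\<^sub>m N"
  by (auto simp: adjacent_transvections_def transvection_involution)

lemma adjacent_transvection_GL:
  "T \<in> adjacent_transvections N f g \<Longrightarrow> T \<in> GL N"
  by (auto simp: adjacent_transvections_def transvection_GL)

lemma generate_adjacent_transvections_subset:
  assumes "mono f" "mono g"
  shows "generate (GL_group N) (adjacent_transvections N f g) \<subseteq> pattern_group N (block_pattern f g)"
proof
  fix A assume "A \<in> generate (GL_group N) (adjacent_transvections N f g)"
  then show "A \<in> pattern_group N (block_pattern f g)"
  proof (induction rule: generate.induct)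
    case one
    then show ?case by (simp add: GL_group_def one_mat_pattern_group reflp_block_pattern)
  next
    case (incl T)
    then show ?case by (rule adjacent_transvections_pattern_group[OF assms])
  next
    case (inv T)
    have "T \<in> carrier (GL_group N)" using inv by (simp add: GL_group_def adjacent_transvection_GL)
    then have "T = inv\<^bsub>GL_group N\<^esub> T"
      using monoid.inv_unique'[OF monoid_GL_group] adjacent_transvection_involution[OF inv]
      by (simp add: GL_group_def)
    then show ?case using adjacent_transvections_pattern_group[OF assms inv] by simp
  next
    case (eng A B)
    then show ?case by (simp add: GL_group_def pattern_group_mult transp_block_pattern)
  qed
qed

lemma transvection_closed_generate_adjacent_transvections:
  assumes "mono f" "mono g"
  shows "transvection_closed N f g (generate (GL_group N) (adjacent_transvections N f g))"
proof
  let ?H = "generate (GL_group N) (adjacent_transvections N f g)"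
  show "1\<^sub>m N \<in> ?H"
    using generate.one[of "GL_group N"] by (simp add: GL_group_def)
  show mult_mem: "A * B \<in> ?H" if "A \<in> ?H" "B \<in> ?H" for A B
    using generate.eng[OF that] by (simp add: GL_group_def)
  fix i j assume ij: "i < N" "j < N" "i \<noteq> j" "block_pattern f g i j"
  consider "i < j" | "j < i" using ij(3) by linarith
  then show "transvection N i j \<in> ?H"
  proof cases
    case 1
    then have "g i = g j" using ij(4) monoD[OF assms(2), of i j] by (simp add: block_pattern_def)
    then show ?thesis
      using upper_transvection_mem[OF mult_mem _ assms(2) 1 ij(2)]
      by (auto simp: adjacent_transvections_def intro: generate.incl)
  next
    case 2
    then have "f j = f i" using ij(4) monoD[OF assms(1), of j i] by (simp add: block_pattern_def)
    then show ?thesis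
      using lower_transvection_mem[OF mult_mem _ assms(1) 2 ij(1)]
      by (auto simp: adjacent_transvections_def intro: generate.incl)
  qed
qed (use assms in simp_all)

theorem generate_adjacent_transvections:
  assumes "mono f" "mono g"
  shows "generate (GL_group N) (adjacent_transvections N f g) = pattern_group N (block_pattern f g)"
  using generate_adjacent_transvections_subset[OF assms]
    transvection_closed.pattern_group_subset[OF transvection_closed_generate_adjacent_transvections[OF assms]]
  by (rule equalityI)

section \<open>The groups P_{lam|mu}\<close>

lemma finite_stopover: "finite (stopover lam)"
proof -
  have "stopover lam \<subseteq> (\<lambda>k. sum_list (take k lam)) ` {..length lam}"
    by (auto simp: stopover_def)
  then show ?thesis by (rule finite_subset) simp
qed

lemma block_of_Suc: "block_of lam (Suc i) = block_of lam i + (if i \<in> stopover lam then 1 else 0)"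
proof -
  have "{s \<in> stopover lam. s < Suc i} = {s \<in> stopover lam. s < i} \<union> (if i \<in> stopover lam then {i} else {})"
    by (auto simp: less_Suc_eq)
  then show ?thesis
    unfolding block_of_def using finite_stopover by (simp add: card_insert_if)
qed

lemma mono_block_of: "mono (block_of lam)"
  unfolding block_of_def by (intro monoI card_mono) (auto intro: finite_stopover)

lemma phi_X: "phi n (X (Suc i)) = transvection (n + 1) (Suc i) i"
  and phi_Y: "phi n (Y (Suc i)) = transvection (n + 1) i (Suc i)"
  by (auto simp: transvection_def E_unit_def intro!: eq_matI)

lemma block_of_eq_Suc_iff: "block_of lam i = block_of lam (Suc i) \<longleftrightarrow> i \<notin> stopover lam"
  by (simp add: block_of_Suc)

lemma phi_S_gens:
  "phi n ` S_gens n lam mu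
     = adjacent_transvections (n + 1) (\<lambda>a. block_of lam (Suc a)) (\<lambda>a. block_of mu (Suc a))"
proof -
  have reindex: "{Z i |i. 1 \<le> i \<and> i \<le> n \<and> i \<notin> S} = (\<lambda>i. Z (Suc i)) ` {i. i < n \<and> Suc i \<notin> S}"
    for Z :: "nat \<Rightarrow> gen" and S
  proof (intro equalityI subsetI)
    fix z assume "z \<in> {Z i |i. 1 \<le> i \<and> i \<le> n \<and> i \<notin> S}"
    then obtain i where "z = Z i" "1 \<le> i" "i \<le> n" "i \<notin> S" by blast
    then have "z = Z (Suc (i - 1)) \<and> i - 1 < n \<and> Suc (i - 1) \<notin> S" by simp
    then show "z \<in> (\<lambda>i. Z (Suc i)) ` {i. i < n \<and> Suc i \<notin> S}" by blast
  next
    fix z assume "z \<in> (\<lambda>i. Z (Suc i)) ` {i. i < n \<and> Suc i \<notin> S}"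
    then obtain i where "z = Z (Suc i)" "i < n" "Suc i \<notin> S" by blast
    then show "z \<in> {Z i |i. 1 \<le> i \<and> i \<le> n \<and> i \<notin> S}" by fastforce
  qed
  show ?thesis
    unfolding S_gens_def reindex adjacent_transvections_def image_Un image_image phi_X phi_Y
    by (simp add: block_of_eq_Suc_iff)
qed

lemma ball_atLeastAtMost_1_iff: "(\<forall>i\<in>{1..N}. P i) \<longleftrightarrow> (\<forall>a<N. P (Suc a))"
proof
  assume H: "\<forall>a<N. P (Suc a)"
  show "\<forall>i\<in>{1..N}. P i"
  proof
    fix i assume "i \<in> {1..N}"
    then have "i = Suc (i - 1)" "i - 1 < N" by auto
    then show "P i" using H by metis
  qed
qed simp

lemma P_par_iff:
  "A \<in> P_par N lam \<longleftrightarrow>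
     A \<in> GL N \<and> (\<forall>a<N. \<forall>b<N. block_of lam (Suc b) < block_of lam (Suc a) \<longrightarrow> A $$ (a, b) = 0)"
  unfolding P_par_def ball_atLeastAtMost_1_iff by simp

lemma transpose_mem_image_iff: "A \<in> transpose_mat ` S \<longleftrightarrow> transpose_mat A \<in> S"
  by (metis image_eqI transpose_transpose imageE)

lemma transpose_GL_iff: "transpose_mat A \<in> GL N \<longleftrightarrow> A \<in> GL N"
  using transpose_GL[of A N] transpose_GL[of "transpose_mat A" N] by auto

lemma P_par_t_iff:
  "A \<in> P_par_t N mu \<longleftrightarrow>
     A \<in> GL N \<and> (\<forall>a<N. \<forall>b<N. block_of mu (Suc a) < block_of mu (Suc b) \<longrightarrow> A $$ (a, b) = 0)"
proof (cases "A \<in> GL N")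
  case True
  then have "transpose_mat A $$ (a, b) = A $$ (b, a)" if "a < N" "b < N" for a b
    using GL_carrier[OF True] that by simp
  with True show ?thesis
    unfolding P_par_t_def transpose_mem_image_iff P_par_iff transpose_GL_iff by auto
qed (simp add: P_par_t_def transpose_mem_image_iff P_par_iff transpose_GL_iff)

lemma P_bar_eq_pattern_group:
  "P_bar N lam mu = pattern_group N (block_pattern (\<lambda>a. block_of lam (Suc a)) (\<lambda>a. block_of mu (Suc a)))"
  unfolding P_bar_def pattern_group_def block_pattern_def Int_def P_par_iff P_par_t_iff mem_Collect_eq
  by (auto simp: not_less[symmetric] simp del: bit_not_zero_iff)

theorem proposition3:
  fixes n :: nat and lam mu :: "nat list"
  assumes "decomposition (n + 1) lam" and "decomposition (n + 1) mu"
  shows "generate (GL_group (n + 1)) (phi n ` S_gens n lam mu) = P_bar (n + 1) lam mu"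
proof -
  have "mono (\<lambda>a. block_of lam (Suc a))" "mono (\<lambda>a. block_of mu (Suc a))"
    by (simp_all add: monoI monoD[OF mono_block_of])
  then show ?thesis
    unfolding phi_S_gens P_bar_eq_pattern_group by (rule generate_adjacent_transvections)
qed

end
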